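(* Let $n,m,p$ be positive integers with $m\le n$. Let $b_1,\dots,b_m\in\mathbb{R}^n$ be column vectors with nonnegative integer entries $b_{kj}$ such that $B=[b_1,\dots,b_m]$ has rank $m$ and no zero row, let $A=[a_{ij}]$ be an irreducible $m\times m$ matrix with nonnegative entries, and $f(x)=\sum_{i,j=1}^m a_{ij}\,x_1^{b_{1j}}\cdots x_n^{b_{nj}}\,(b_i-b_j)$. Let $C=[c_{ij}]$ be a $p\times n$ matrix with each entry $0$ or a real number $\ge1$, and $h_i(x)=|x_1|^{c_{i1}}\cdots|x_n|^{c_{in}}$. Let $\mathcal{D}=\mathrm{span}\{b_i-b_j\}$ and assume no boundary equilibria (whenever $x\in\mathbb{R}^n_{\ge0}$ has a zero coordinate and $x-\bar x\in\mathcal{D}$ for some $\bar x\in\mathbb{R}^n_{>0}$, then $f(x)\ne0$). Let $f^*(z,u)=f(z)+C'(u-h(z))$. For $\bar x\in E_+$ let $V(z)=\sum_{i=1}^n\bar x_i\,g(z_i/\bar x_i)$, where $g(r)=r\ln r+1-r$ for $r>0$, $g(0)=1$. Then for each $\bar x\in E_+$ and each constant $u_{\max}\ge0$ there exists a constant $c_{\bar x,u_{\max}}$ such that $\nabla V(z)f^*(z,u)\le c_{\bar x,u_{\max}}$ for all $z\in\mathbb{R}^n_{>0}$ and all $u\in[0,u_{\max}]^p$.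
   Context: $E_+=\{x\in\mathbb{R}^n_{>0}:f(x)=0\}$. $C'$ is the transpose of $C$. *)

theory Defs
  imports "HOL-Analysis.Analysis"
begin

definition bcol :: "nat^'m^'n \<Rightarrow> 'm \<Rightarrow> real^'n" where
  "bcol B j = (\<chi> k. real (B $ k $ j))"

definition Breal :: "nat^'m^'n \<Rightarrow> real^'m^'n" where
  "Breal B = (\<chi> k j. real (B $ k $ j))"

definition monom_b :: "nat^'m^'n \<Rightarrow> 'm \<Rightarrow> real^'n \<Rightarrow> real" where
  "monom_b B j x = (\<Prod>k\<in>UNIV. (x $ k) ^ (B $ k $ j))"

definition fvec :: "real^'m^'m \<Rightarrow> nat^'m^'n \<Rightarrow> real^'n \<Rightarrow> real^'n" where
  "fvec A B x = (\<Sum>i\<in>UNIV. \<Sum>j\<in>UNIV. (A $ i $ j * monom_b B j x) *\<^sub>R (bcol B i - bcol B j))"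

(* irreducible square matrix: not reducible, i.e. there is no nonempty proper index set I
   with a_ij = 0 for all i in I, j not in I (permutation-similar to block upper triangular) *)
definition irreducible_mat :: "real^'m^'m \<Rightarrow> bool" where
  "irreducible_mat A \<longleftrightarrow>
     \<not> (\<exists>I::'m set. I \<noteq> {} \<and> I \<noteq> UNIV \<and> (\<forall>i\<in>I. \<forall>j\<in>UNIV - I. A $ i $ j = 0))"

definition hvec :: "real^'n^'p \<Rightarrow> real^'n \<Rightarrow> real^'p" where
  "hvec C x = (\<chi> i. \<Prod>k\<in>UNIV. (if C $ i $ k = 0 then 1 else \<bar>x $ k\<bar> powr (C $ i $ k)))"

definition fstar :: "real^'m^'m \<Rightarrow> nat^'m^'n \<Rightarrow> real^'n^'p \<Rightarrow> real^'n \<Rightarrow> real^'p \<Rightarrow> real^'n" where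
  "fstar A B C z u = fvec A B z + transpose C *v (u - hvec C z)"

definition Dspace :: "nat^'m^'n \<Rightarrow> (real^'n) set" where
  "Dspace B = span {bcol B i - bcol B j | i j. True}"

definition Eplus :: "real^'m^'m \<Rightarrow> nat^'m^'n \<Rightarrow> (real^'n) set" where
  "Eplus A B = {x. (\<forall>k. x $ k > 0) \<and> fvec A B x = 0}"

(* g(r) = r ln r + 1 - r for r > 0, g(0) = 1 (value for r < 0 irrelevant) *)
definition gfun :: "real \<Rightarrow> real" where
  "gfun r = (if r > 0 then r * ln r + 1 - r else 1)"

definition Vfun :: "real^'n \<Rightarrow> real^'n \<Rightarrow> real" where
  "Vfun xb z = (\<Sum>i\<in>UNIV. xb $ i * gfun (z $ i / xb $ i))"

end

theory Submission
  imports Defs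
begin

(* Write z = xb * exp w componentwise, so that the gradient of V at z is w. Then
   z^(b_j) = xb^(b_j) * exp <b_j, w> and h_i(z) = h_i(xb) * exp (C w)_i.
   Because B has full column rank, f(xb) = B (net flux of each complex) = 0 forces xb to be
   complex balanced; with exp a * (b - a) <= exp b - exp a this gives <w, f(z)> <= 0.
   The input term is sum_i L_i (u_i - K_i exp L_i) with L = C w and K = h(xb) > 0, and each
   summand is at most umax^2 / (4 K_i) + K_i. *)

lemma exp_mult_diff_le: "exp (a::real) * (b - a) \<le> exp b - exp a"
proof -
  have "exp a * (1 + (b - a)) \<le> exp a * exp (b - a)"
    by (simp add: exp_ge_add_one_self)
  then show ?thesis by (simp add: exp_diff algebra_simps)
qed

lemma mult_diff_exp_le:
  fixes u U K L :: real
  assumes "0 \<le> u" "u \<le> U" "K > 0"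
  shows "L * (u - K * exp L) \<le> U\<^sup>2 / (4 * K) + K"
proof (cases "L \<ge> 0")
  case True
  have "u * L \<le> U * L"
    using True assms by (simp add: mult_right_mono)
  moreover have "K * L * (1 + L) \<le> K * L * exp L"
    using True assms exp_ge_add_one_self[of L] by (simp add: mult_left_mono)
  ultimately have "L * (u - K * exp L) \<le> U * L - K * (1 + L) * L"
    by (simp add: algebra_simps)
  also have "\<dots> \<le> U * L - K * L\<^sup>2"
    using True assms by (simp add: power2_eq_square algebra_simps)
  also have "\<dots> \<le> U\<^sup>2 / (4 * K)"
  proof -
    have "4 * K * (U * L - K * L\<^sup>2) \<le> U\<^sup>2"
      using zero_le_power2[of "U - 2 * K * L"] by (simp add: power2_eq_square algebra_simps)
    then show ?thesis using assms by (simp add: field_simps)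
  qed
  finally show ?thesis using assms by simp
next
  case False
  have "- L \<le> exp (- L)"
    using exp_ge_add_one_self[of "- L"] by simp
  then have "- L * exp L \<le> 1"
    using mult_right_mono[of "- L" "exp (- L)" "exp L"] by (simp add: exp_minus field_simps)
  then have "K * (- L * exp L) \<le> K"
    using assms mult_left_mono[of "- L * exp L" 1 K] by simp
  moreover have "u * L \<le> 0"
    using False assms by (simp add: mult_nonneg_nonpos)
  moreover have "0 \<le> U\<^sup>2 / (4 * K)"
    using assms by simp
  moreover have "L * (u - K * exp L) = u * L + K * (- L * exp L)"
    by (simp add: algebra_simps)
  ultimately show ?thesis by linarith
qed

lemma balanced_sum_exp_mult_diff_nonpos:
  fixes a :: "'i::finite \<Rightarrow> 'i \<Rightarrow> real" and M y :: "'i \<Rightarrow> real"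
  assumes a_nonneg: "\<forall>i j. a i j \<ge> 0" and M_nonneg: "\<forall>j. M j \<ge> 0"
    and balanced: "\<forall>i. (\<Sum>j\<in>UNIV. a i j * M j) = (\<Sum>j\<in>UNIV. a j i) * M i"
  shows "(\<Sum>i\<in>UNIV. \<Sum>j\<in>UNIV. a i j * M j * exp (y j) * (y i - y j)) \<le> 0"
proof -
  have "(\<Sum>i\<in>UNIV. \<Sum>j\<in>UNIV. a i j * M j * exp (y j) * (y i - y j))
      \<le> (\<Sum>i\<in>UNIV. \<Sum>j\<in>UNIV. a i j * M j * (exp (y i) - exp (y j)))"
    using a_nonneg M_nonneg
    by (intro sum_mono) (simp add: mult.assoc mult_left_mono exp_mult_diff_le)
  also have "\<dots> = (\<Sum>i\<in>UNIV. \<Sum>j\<in>UNIV. a i j * M j * exp (y i))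
      - (\<Sum>i\<in>UNIV. \<Sum>j\<in>UNIV. a i j * M j * exp (y j))"
    by (simp add: sum_subtractf[symmetric] algebra_simps)
  also have "(\<Sum>i\<in>UNIV. \<Sum>j\<in>UNIV. a i j * M j * exp (y j)) = (\<Sum>i\<in>UNIV. \<Sum>j\<in>UNIV. a j i * M i * exp (y i))"
    by (rule sum.swap)
  also have "(\<Sum>i\<in>UNIV. \<Sum>j\<in>UNIV. a i j * M j * exp (y i)) - \<dots>
      = (\<Sum>i\<in>UNIV. exp (y i) * ((\<Sum>j\<in>UNIV. a i j * M j) - (\<Sum>j\<in>UNIV. a j i) * M i))"
    by (simp add: sum_subtractf[symmetric] algebra_simps sum_distrib_left sum_distrib_right)
  also have "\<dots> = 0"
    using balanced by simp
  finally show ?thesis .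
qed

lemma has_real_derivative_gfun:
  assumes "r > 0"
  shows "(gfun has_real_derivative ln r) (at r)"
proof -
  have "((\<lambda>r. r * ln r + 1 - r) has_real_derivative ln r) (at r)"
    using assms by (auto intro!: derivative_eq_intros)
  then show ?thesis
    by (rule has_field_derivative_transform_within_open[where S="{0<..}"])
      (use assms in \<open>auto simp: gfun_def\<close>)
qed

lemma has_derivative_Vfun:
  fixes xb z :: "real^'n"
  assumes xb: "\<forall>k. xb $ k > 0" and z: "\<forall>k. z $ k > 0"
  shows "(Vfun xb has_derivative (\<lambda>h. (\<chi> k. ln (z $ k / xb $ k)) \<bullet> h)) (at z)"
proof -
  have "((\<lambda>z. xb $ k * gfun (z $ k / xb $ k)) has_derivative (\<lambda>h. ln (z $ k / xb $ k) * h $ k)) (at z)"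
    for k
  proof -
    have "((\<lambda>z::real^'n. z $ k / xb $ k) has_derivative (\<lambda>h. h $ k / xb $ k)) (at z)"
      using xb[rule_format, of k]
      by (auto intro!: derivative_eq_intros bounded_linear.has_derivative[OF bounded_linear_vec_nth])
    moreover have "(gfun has_derivative (\<lambda>t. t * ln (z $ k / xb $ k))) (at (z $ k / xb $ k))"
      using has_real_derivative_gfun[of "z $ k / xb $ k"] xb z
      by (simp add: has_field_derivative_def mult.commute[of _ "ln _"])
    ultimately have "((\<lambda>z. gfun (z $ k / xb $ k)) has_derivative (\<lambda>h. h $ k / xb $ k * ln (z $ k / xb $ k))) (at z)"
      using has_derivative_compose by fastforce
    from has_derivative_mult_right[OF this, of "xb $ k"] show ?thesis
      using xb[rule_format, of k] by (simp add: field_simps)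
  qed
  then have "(Vfun xb has_derivative (\<lambda>h. \<Sum>k\<in>UNIV. ln (z $ k / xb $ k) * h $ k)) (at z)"
    unfolding Vfun_def[abs_def] by (rule has_derivative_sum)
  then show ?thesis by (simp add: inner_vec_def)
qed

(* Inflow minus outflow of complex i, the reaction j \<rightarrow> i having rate a_ij x^(b_j). *)
definition complex_net_flux :: "real^'m^'m \<Rightarrow> nat^'m^'n \<Rightarrow> real^'n \<Rightarrow> 'm \<Rightarrow> real" where
  "complex_net_flux A B x i = (\<Sum>j\<in>UNIV. A $ i $ j * monom_b B j x) - (\<Sum>j\<in>UNIV. A $ j $ i) * monom_b B i x"

lemma fvec_eq_sum_complex_net_flux:
  "fvec A B x = (\<Sum>i\<in>UNIV. complex_net_flux A B x i *\<^sub>R bcol B i)"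
proof -
  let ?r = "\<lambda>i j. A $ i $ j * monom_b B j x"
  have "fvec A B x = (\<Sum>i\<in>UNIV. \<Sum>j\<in>UNIV. ?r i j *\<^sub>R bcol B i) - (\<Sum>i\<in>UNIV. \<Sum>j\<in>UNIV. ?r i j *\<^sub>R bcol B j)"
    by (simp add: fvec_def scaleR_diff_right sum_subtractf)
  also have "(\<Sum>i\<in>UNIV. \<Sum>j\<in>UNIV. ?r i j *\<^sub>R bcol B j) = (\<Sum>i\<in>UNIV. \<Sum>j\<in>UNIV. ?r j i *\<^sub>R bcol B i)"
    by (rule sum.swap)
  finally show ?thesis
    by (simp add: complex_net_flux_def scaleR_diff_left scaleR_sum_left sum_subtractf sum_distrib_right
        mult.assoc)
qed

lemma column_Breal: "column j (Breal B) = bcol B j"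
  by (simp add: column_def Breal_def bcol_def)

lemma complex_net_flux_eq_0_if_full_rank:
  fixes A :: "real^'m^'m" and B :: "nat^'m^'n"
  assumes "rank (Breal B) = CARD('m)" and "fvec A B x = 0"
  shows "complex_net_flux A B x i = 0"
proof -
  have "Breal B *v (\<chi> i. complex_net_flux A B x i) = 0"
    using assms(2) by (simp add: matrix_mult_sum column_Breal scalar_mult_eq_scaleR fvec_eq_sum_complex_net_flux)
  then have "(\<chi> i. complex_net_flux A B x i) = (0 :: real^'m)"
    using matrix_nonfull_linear_equations_eq[of "Breal B"] assms(1) by blast
  then show ?thesis by (simp add: vec_eq_iff)
qed

lemma monom_b_scale_exp:
  "monom_b B j (\<chi> k. x $ k * exp (w $ k)) = monom_b B j x * exp (bcol B j \<bullet> w)"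
  by (simp add: monom_b_def bcol_def inner_vec_def power_mult_distrib exp_of_nat_mult prod.distrib
      exp_sum)

lemma hvec_scale_exp:
  "hvec C (\<chi> k. x $ k * exp (w $ k)) $ i = hvec C x $ i * exp ((C *v w) $ i)"
proof -
  have factor: "(if C $ i $ k = 0 then 1 else \<bar>x $ k * exp (w $ k)\<bar> powr C $ i $ k)
      = (if C $ i $ k = 0 then 1 else \<bar>x $ k\<bar> powr C $ i $ k) * exp (C $ i $ k * w $ k)" for k
    by (simp add: abs_mult powr_mult exp_powr_real mult.commute)
  have "hvec C (\<chi> k. x $ k * exp (w $ k)) $ i
      = (\<Prod>k\<in>UNIV. (if C $ i $ k = 0 then 1 else \<bar>x $ k\<bar> powr C $ i $ k) * exp (C $ i $ k * w $ k))"
    unfolding hvec_def vec_lambda_beta by (intro prod.cong refl factor)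
  also have "\<dots> = hvec C x $ i * exp ((C *v w) $ i)"
    by (simp add: hvec_def matrix_vector_mult_def prod.distrib exp_sum)
  finally show ?thesis .
qed

lemma inner_fvec_scale_exp_nonpos:
  fixes A :: "real^'m^'m" and B :: "nat^'m^'n"
  assumes "rank (Breal B) = CARD('m)" and "\<forall>i j. A $ i $ j \<ge> 0"
    and "\<forall>k. x $ k \<ge> 0" and "fvec A B x = 0"
  shows "w \<bullet> fvec A B (\<chi> k. x $ k * exp (w $ k)) \<le> 0"
proof -
  let ?y = "\<lambda>j. bcol B j \<bullet> w"
  have "w \<bullet> fvec A B (\<chi> k. x $ k * exp (w $ k))
      = (\<Sum>i\<in>UNIV. \<Sum>j\<in>UNIV. A $ i $ j * monom_b B j x * exp (?y j) * (?y i - ?y j))"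
    by (simp add: fvec_def monom_b_scale_exp inner_sum_right inner_diff_right inner_commute mult.assoc)
  also have "\<dots> \<le> 0"
  proof (rule balanced_sum_exp_mult_diff_nonpos)
    show "\<forall>j. monom_b B j x \<ge> 0"
      using assms(3) by (simp add: monom_b_def prod_nonneg)
    show "\<forall>i. (\<Sum>j\<in>UNIV. A $ i $ j * monom_b B j x) = (\<Sum>j\<in>UNIV. A $ j $ i) * monom_b B i x"
      using complex_net_flux_eq_0_if_full_rank[OF assms(1,4)] by (simp add: complex_net_flux_def)
  qed (use assms(2) in simp)
  finally show ?thesis .
qed

lemma inner_input_scale_exp_le:
  fixes C :: "real^'n^'p"
  assumes x: "\<forall>k. x $ k > 0" and u: "\<forall>i. 0 \<le> u $ i \<and> u $ i \<le> U"
  shows "w \<bullet> (transpose C *v (u - hvec C (\<chi> k. x $ k * exp (w $ k))))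
    \<le> (\<Sum>i\<in>UNIV. U\<^sup>2 / (4 * hvec C x $ i) + hvec C x $ i)"
proof -
  have "w \<bullet> (transpose C *v (u - hvec C (\<chi> k. x $ k * exp (w $ k))))
      = (\<Sum>i\<in>UNIV. (C *v w) $ i * (u $ i - hvec C x $ i * exp ((C *v w) $ i)))"
    by (simp only: inner_commute[of w] transpose_matrix_vector dot_lmul_matrix)
      (simp add: inner_commute inner_vec_def hvec_scale_exp)
  also have "\<dots> \<le> (\<Sum>i\<in>UNIV. U\<^sup>2 / (4 * hvec C x $ i) + hvec C x $ i)"
  proof (intro sum_mono mult_diff_exp_le)
    fix i
    show "hvec C x $ i > 0"
      using x by (auto simp: hvec_def less_imp_neq[symmetric] intro!: prod_pos)
  qed (use u in auto)
  finally show ?thesis .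
qed

theorem lemma2p10:
  fixes A :: "real^'m^'m" and B :: "nat^'m^'n" and C :: "real^'n^'p"
  assumes m_le_n: "CARD('m) \<le> CARD('n)"
    and rankB: "rank (Breal B) = CARD('m)"
    and nozero_row: "\<forall>k. \<exists>j. B $ k $ j \<noteq> 0"
    and A_nonneg: "\<forall>i j. A $ i $ j \<ge> 0"
    and A_irred: "irreducible_mat A"
    and C_entries: "\<forall>i k. C $ i $ k = 0 \<or> C $ i $ k \<ge> 1"
    and no_boundary_eq: "\<forall>x. ((\<forall>k. x $ k \<ge> 0) \<and> (\<exists>k. x $ k = 0) \<and>
              (\<exists>xb. (\<forall>k. xb $ k > 0) \<and> x - xb \<in> Dspace B)) \<longrightarrow> fvec A B x \<noteq> 0"
    and xb: "xb \<in> Eplus A B"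
    and umax: "umax \<ge> (0::real)"
  shows "\<exists>c. \<forall>z u. (\<forall>k. z $ k > 0) \<and> (\<forall>i. 0 \<le> u $ i \<and> u $ i \<le> umax) \<longrightarrow>
           (\<exists>D. (Vfun xb has_derivative D) (at z) \<and> D (fstar A B C z u) \<le> c)"
proof -
  have xb_pos: "\<forall>k. xb $ k > 0" and xb_eq: "fvec A B xb = 0"
    using xb by (auto simp: Eplus_def)
  let ?c = "\<Sum>i\<in>UNIV. umax\<^sup>2 / (4 * hvec C xb $ i) + hvec C xb $ i"
  show ?thesis
  proof (intro exI[of _ ?c] allI impI)
    fix z :: "real^'n" and u :: "real^'p"
    assume "(\<forall>k. z $ k > 0) \<and> (\<forall>i. 0 \<le> u $ i \<and> u $ i \<le> umax)"
    then have z: "\<forall>k. z $ k > 0" and u: "\<forall>i. 0 \<le> u $ i \<and> u $ i \<le> umax"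
      by auto
    define w where "w = (\<chi> k. ln (z $ k / xb $ k))"
    have z_eq: "z = (\<chi> k. xb $ k * exp (w $ k))"
      using xb_pos z by (simp add: w_def vec_eq_iff less_imp_neq[symmetric])
    have "w \<bullet> fstar A B C z u \<le> 0 + ?c"
      unfolding fstar_def inner_add_right z_eq
      using rankB A_nonneg xb_pos xb_eq u
      by (intro add_mono inner_fvec_scale_exp_nonpos inner_input_scale_exp_le) (auto intro: less_imp_le)
    moreover have "(Vfun xb has_derivative (\<lambda>h. w \<bullet> h)) (at z)"
      unfolding w_def using xb_pos z by (rule has_derivative_Vfun)
    ultimately show "\<exists>D. (Vfun xb has_derivative D) (at z) \<and> D (fstar A B C z u) \<le> ?c"
      by auto
  qed
qed

end
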